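(* Let $L$ spin-orbitals be indexed by $\{1,\dots,L\}$ and $1\le N_{\mathrm{occ}}<L$; o-operators are $\hat a^\dagger_p,\hat a_p$ with $p\le N_{\mathrm{occ}}$, v-operators those with $p>N_{\mathrm{occ}}$. Let $\hat C$ be a chain (product, in a fixed order) of $n\ge1$ excitation operators $\hat E^a_i=\hat a^\dagger_a\hat a_i$ and $n$ deexcitation operators $\hat D^i_a=\hat a^\dagger_i\hat a_a$ ($i\le N_{\mathrm{occ}}<a$), viewed as a chain of $4n$ elementary operators by expanding each (de)excitation operator into its two factors. Let $S=s_1\cdots s_{2n}$ be the word obtained from $\hat C$ by replacing each deexcitation operator by "(" and each excitation operator by ")", and suppose $S$ is a Dyck word. For $0\le k\le 2n$ let $d_k$ be the number of "(" minus the number of ")" among $s_1,\dots,s_k$, and let $(d^\uparrow_1,\dots,d^\uparrow_n)$ be the list of the values $d_k$ at those positions $k$ with $s_k=$ "(" (the opening depths). Define $\mathcal W(\hat C)$ as the number of partitions of the $4n$ elementary operators of $\hat C$ into $2n$ pairs such that every pair $(x,y)$, with $x$ to the left of $y$ in the chain, is either an o-creation operator $x$ with an o-annihilation operator $y$, or a v-annihilation operator $x$ with a v-creation operator $y$. Then $$\mathcal W(\hat C)=\Big(\prod_{k=1}^n d^\uparrow_k\Big)^2.$$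
   Context: A Dyck word is a finite word over $\{(,)\}$ with as many opening as closing brackets, every prefix of which contains at least as many opening as closing brackets. Motivation: a partition into pairs is a full contraction in the sense of Wick's theorem relative to the Fermi vacuum (Slater determinant with spin-orbitals $1,\dots,N_{\mathrm{occ}}$ occupied); the pairs allowed in the definition of $\mathcal W$ are exactly those contractions whose Fermi-vacuum value is not forced to vanish by the contraction rules $\langle \hat a^\dagger_r\hat a_s\rangle=\delta_{rs}n_rn_s$, $\langle \hat a_s\hat a^\dagger_r\rangle=\delta_{rs}(1-n_r)(1-n_s)$ (contractions of two creation or two annihilation operators vanish), so $\mathcal W(\hat C)$ counts the "well" full contractions. *)

theory Defs
  imports Main
begin

text \<open>(De)excitation operators. Exc i a is E^a_i = a^dag_a a_i; Deexc i a is D^i_a = a^dag_i a_a.\<close>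
datatype exop = Exc nat nat | Deexc nat nat

text \<open>Elementary operator: (is_creation, spin-orbital index).\<close>
type_synonym elop = "bool \<times> nat"

fun expand :: "exop \<Rightarrow> elop list" where
  "expand (Exc i a) = [(True, a), (False, i)]"
| "expand (Deexc i a) = [(True, i), (False, a)]"

definition elems :: "exop list \<Rightarrow> elop list" where
  "elems C = concat (map expand C)"

fun valid_exop :: "nat \<Rightarrow> nat \<Rightarrow> exop \<Rightarrow> bool" where
  "valid_exop L Nocc (Exc i a) = (1 \<le> i \<and> i \<le> Nocc \<and> Nocc < a \<and> a \<le> L)"
| "valid_exop L Nocc (Deexc i a) = (1 \<le> i \<and> i \<le> Nocc \<and> Nocc < a \<and> a \<le> L)"

fun is_deexc :: "exop \<Rightarrow> bool" where
  "is_deexc (Deexc _ _) = True"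
| "is_deexc (Exc _ _) = False"

text \<open>Bracket word: True = opening bracket (deexcitation), False = closing (excitation).\<close>
definition bracket_word :: "exop list \<Rightarrow> bool list" where
  "bracket_word C = map is_deexc C"

definition depth :: "bool list \<Rightarrow> nat \<Rightarrow> int" where
  "depth w k = int (length (filter id (take k w))) - int (length (filter Not (take k w)))"

definition dyck :: "bool list \<Rightarrow> bool" where
  "dyck w \<longleftrightarrow> (\<forall>k \<le> length w. depth w k \<ge> 0) \<and> depth w (length w) = 0"

text \<open>Opening depths d_k at 1-based positions k with s_k an opening bracket.\<close>
definition opening_depths :: "bool list \<Rightarrow> int list" where
  "opening_depths w = [depth w (k + 1). k \<leftarrow> [0..<length w], w ! k]"

definition well_pair :: "nat \<Rightarrow> elop \<Rightarrow> elop \<Rightarrow> bool" where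
  "well_pair Nocc x y \<longleftrightarrow>
     (fst x \<and> snd x \<le> Nocc \<and> \<not> fst y \<and> snd y \<le> Nocc)
   \<or> (\<not> fst x \<and> Nocc < snd x \<and> fst y \<and> Nocc < snd y)"

definition well_contractions :: "nat \<Rightarrow> elop list \<Rightarrow> (nat \<times> nat) set set" where
  "well_contractions Nocc e =
    {M. M \<subseteq> {(p, q). p < q \<and> q < length e \<and> well_pair Nocc (e ! p) (e ! q)}
        \<and> (\<forall>r < length e. \<exists>!pr \<in> M. fst pr = r \<or> snd pr = r)}"

definition W :: "nat \<Rightarrow> exop list \<Rightarrow> nat" where
  "W Nocc C = card (well_contractions Nocc (elems C))"

end

theory Submission
  imports Defs
begin

text \<open>
  A well contraction pairs o-operators only with o-operators and v-operators only with
  v-operators, so \<open>W\<close> is the product of the numbers of o- and of v-contractions. Each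
  (de)excitation operator contributes exactly one o- and one v-operator. Read in chain order,
  the o-operators form the bracket word \<open>S\<close> itself (creators come from deexcitations and must
  be paired with a later annihilator, which comes from an excitation), and so do the
  v-operators (now the annihilator comes from the deexcitation). Both counts are therefore the
  number of ways to pair every opening bracket of \<open>S\<close> with a later closing one.

  For this count, pair the last opening bracket first: every bracket after it is closing, so it
  has as many partners as closing brackets follow it. Deleting it together with its partner
  changes neither the balance nor, for any earlier opening bracket, the surplus of closing over
  opening brackets to its right. Hence the count is the product of these surpluses, and in a
  Dyck word the surplus to the right of an opening bracket equals its depth.
\<close>

lemma Bex1_insert_fresh:
  assumes "P a" and "\<forall>x\<in>A. \<not> P x"
  shows "\<exists>!x\<in>insert a A. P x"
  using assms by (intro ex1I[of _ a]) auto

lemma Bex1_insert_irrelevant: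
  assumes "\<not> P a"
  shows "(\<exists>!x\<in>insert a A. P x) \<longleftrightarrow> (\<exists>!x\<in>A. P x)"
  using assms by (metis insert_iff)

lemma Bex1_Un_irrelevant:
  assumes "\<forall>x\<in>B. \<not> P x"
  shows "(\<exists>!x\<in>A \<union> B. P x) \<longleftrightarrow> (\<exists>!x\<in>A. P x)"
  using assms by (metis Un_iff)

definition perfect_matchings :: "'a set \<Rightarrow> ('a \<times> 'a) set \<Rightarrow> ('a \<times> 'a) set set" where
  "perfect_matchings S A = {M. M \<subseteq> A \<and> (\<forall>r\<in>S. \<exists>!e\<in>M. fst e = r \<or> snd e = r)}"

lemma finite_perfect_matchings:
  "finite A \<Longrightarrow> finite (perfect_matchings S A)"
  unfolding perfect_matchings_def by (rule finite_subset[of _ "Pow A"]) auto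

lemma perfect_matchings_subset: "M \<in> perfect_matchings S A \<Longrightarrow> M \<subseteq> A"
  unfolding perfect_matchings_def by blast

lemma perfect_matchings_empty: "perfect_matchings {} {} = {{}}"
  unfolding perfect_matchings_def by auto

lemma perfect_matchings_expand:
  assumes "r \<in> S" and "A \<subseteq> S \<times> S"
  shows "perfect_matchings S A =
    (\<Union>e\<in>{e\<in>A. fst e = r \<or> snd e = r}.
       insert e ` perfect_matchings (S - {fst e, snd e}) (Restr A (S - {fst e, snd e})))"
    (is "_ = (\<Union>e\<in>?E. insert e ` perfect_matchings (?S e) (?A e))")
proof (intro equalityI subsetI)
  fix M assume "M \<in> perfect_matchings S A"
  hence MA: "M \<subseteq> A" and cover: "\<And>x. x \<in> S \<Longrightarrow> \<exists>!d\<in>M. fst d = x \<or> snd d = x"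
    unfolding perfect_matchings_def by auto
  obtain e where e: "e \<in> M" "fst e = r \<or> snd e = r" using cover[OF \<open>r \<in> S\<close>] by blast
  have ends: "fst e \<in> S" "snd e \<in> S" using e MA assms(2) by auto
  have M_eq: "M = insert e (M - {e})" using e(1) by blast
  have "M - {e} \<subseteq> ?S e \<times> ?S e"
  proof
    fix d assume d: "d \<in> M - {e}"
    have "fst d \<notin> {fst e, snd e} \<and> snd d \<notin> {fst e, snd e}"
      using cover[OF ends(1)] cover[OF ends(2)] d e(1) by blast
    thus "d \<in> ?S e \<times> ?S e" using d MA assms(2) by (auto simp: mem_Times_iff)
  qed
  moreover have "\<exists>!d\<in>M - {e}. fst d = x \<or> snd d = x" if "x \<in> ?S e" for x
  proof -
    have "x \<in> S" and untouched: "\<not> (fst e = x \<or> snd e = x)" using that by auto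
    from untouched have "(\<exists>!d\<in>insert e (M - {e}). fst d = x \<or> snd d = x) \<longleftrightarrow>
        (\<exists>!d\<in>M - {e}. fst d = x \<or> snd d = x)"
      by (rule Bex1_insert_irrelevant)
    thus ?thesis using cover[OF \<open>x \<in> S\<close>] by (simp only: M_eq[symmetric])
  qed
  ultimately have "M - {e} \<in> perfect_matchings (?S e) (?A e)"
    using MA unfolding perfect_matchings_def by blast
  thus "M \<in> (\<Union>e\<in>?E. insert e ` perfect_matchings (?S e) (?A e))"
    using M_eq e MA by blast
next
  fix M assume "M \<in> (\<Union>e\<in>?E. insert e ` perfect_matchings (?S e) (?A e))"
  then obtain e M' where e: "e \<in> A" "fst e = r \<or> snd e = r" and M: "M = insert e M'"
    and M': "M' \<in> perfect_matchings (?S e) (?A e)"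
    by blast
  from M' have M'A: "M' \<subseteq> ?A e"
    and cover: "\<And>x. x \<in> ?S e \<Longrightarrow> \<exists>!d\<in>M'. fst d = x \<or> snd d = x"
    unfolding perfect_matchings_def by auto
  have "\<exists>!d\<in>M. fst d = x \<or> snd d = x" if "x \<in> S" for x
  proof (cases "x \<in> {fst e, snd e}")
    case True
    hence "\<forall>d\<in>M'. \<not> (fst d = x \<or> snd d = x)" using M'A by (auto simp: mem_Times_iff)
    thus ?thesis using True unfolding M by (intro Bex1_insert_fresh) auto
  next
    case False
    hence "x \<in> ?S e" "\<not> (fst e = x \<or> snd e = x)" using that by auto
    thus ?thesis using cover Bex1_insert_irrelevant unfolding M by blast
  qed
  thus "M \<in> perfect_matchings S A" using M M'A e(1) unfolding perfect_matchings_def by blast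
qed

lemma card_perfect_matchings_expand:
  assumes "finite S" and "r \<in> S" and "A \<subseteq> S \<times> S"
  shows "card (perfect_matchings S A) =
    (\<Sum>e\<in>{e\<in>A. fst e = r \<or> snd e = r}.
       card (perfect_matchings (S - {fst e, snd e}) (Restr A (S - {fst e, snd e}))))"
proof -
  let ?E = "{e\<in>A. fst e = r \<or> snd e = r}"
  let ?S = "\<lambda>e. S - {fst e, snd e}"
  let ?P = "\<lambda>e. perfect_matchings (?S e) (Restr A (?S e))"
  have finA: "finite A" using assms(1,3) finite_subset by blast
  have avoid: "d \<notin> M" if "M \<in> ?P e" "d \<in> ?E" "e \<in> ?E" for d e M
    using perfect_matchings_subset[OF that(1)] that(2,3) by (auto simp: mem_Times_iff)
  have "card (perfect_matchings S A) = card (\<Union>e\<in>?E. insert e ` ?P e)"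
    using perfect_matchings_expand[OF assms(2,3)] by simp
  also have "\<dots> = (\<Sum>e\<in>?E. card (insert e ` ?P e))"
  proof (rule card_UN_disjoint)
    show "finite ?E" using finA by simp
    show "\<forall>e\<in>?E. finite (insert e ` ?P e)"
      using finA by (simp add: finite_perfect_matchings)
    show "\<forall>e\<in>?E. \<forall>d\<in>?E. e \<noteq> d \<longrightarrow> insert e ` ?P e \<inter> insert d ` ?P d = {}"
    proof (intro ballI impI equals0I)
      fix e d N assume "e \<in> ?E" "d \<in> ?E" "e \<noteq> d"
        and "N \<in> insert e ` ?P e \<inter> insert d ` ?P d"
      then obtain Y where "Y \<in> ?P d" "e \<in> Y" by blast
      thus False using avoid \<open>e \<in> ?E\<close> \<open>d \<in> ?E\<close> by blast
    qed
  qed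
  also have "\<dots> = (\<Sum>e\<in>?E. card (?P e))"
  proof (intro sum.cong refl card_image inj_onI)
    fix e X Y assume e: "e \<in> ?E" and X: "X \<in> ?P e" and Y: "Y \<in> ?P e"
      and "insert e X = insert e Y"
    with avoid[OF X e e] avoid[OF Y e e] show "X = Y" by (simp add: insert_ident)
  qed
  finally show ?thesis .
qed

lemma unique_touching_Un:
  assumes "X \<subseteq> S \<times> S" and "Y \<subseteq> T \<times> T" and "S \<inter> T = {}"
  shows "(\<forall>x\<in>S \<union> T. \<exists>!e\<in>X \<union> Y. fst e = x \<or> snd e = x) \<longleftrightarrow>
    (\<forall>x\<in>S. \<exists>!e\<in>X. fst e = x \<or> snd e = x) \<and> (\<forall>x\<in>T. \<exists>!e\<in>Y. fst e = x \<or> snd e = x)"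
proof -
  have on_S: "(\<exists>!e\<in>X \<union> Y. fst e = x \<or> snd e = x) \<longleftrightarrow> (\<exists>!e\<in>X. fst e = x \<or> snd e = x)"
    if "x \<in> S" for x
  proof (rule Bex1_Un_irrelevant)
    show "\<forall>e\<in>Y. \<not> (fst e = x \<or> snd e = x)"
      using that assms by (metis disjoint_iff mem_Times_iff subset_iff)
  qed
  have on_T: "(\<exists>!e\<in>X \<union> Y. fst e = x \<or> snd e = x) \<longleftrightarrow> (\<exists>!e\<in>Y. fst e = x \<or> snd e = x)"
    if "x \<in> T" for x
  proof (subst Un_commute, rule Bex1_Un_irrelevant)
    show "\<forall>e\<in>X. \<not> (fst e = x \<or> snd e = x)"
      using that assms by (metis disjoint_iff mem_Times_iff subset_iff)
  qed
  show ?thesis by (simp only: ball_Un on_S on_T cong: ball_cong)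
qed

lemma card_perfect_matchings_Un:
  assumes "A \<subseteq> S \<times> S" and "B \<subseteq> T \<times> T" and "S \<inter> T = {}"
  shows "card (perfect_matchings (S \<union> T) (A \<union> B)) =
    card (perfect_matchings S A) * card (perfect_matchings T B)"
proof -
  have AB: "A \<inter> B = {}" using assms by blast
  note cover_Un = unique_touching_Un[OF subset_trans[OF _ assms(1)] subset_trans[OF _ assms(2)] assms(3)]
  have "bij_betw (\<lambda>(X, Y). X \<union> Y) (perfect_matchings S A \<times> perfect_matchings T B)
          (perfect_matchings (S \<union> T) (A \<union> B))"
  proof (rule bij_betw_byWitness[where f' = "\<lambda>M. (M \<inter> A, M \<inter> B)"])
    show "\<forall>XY\<in>perfect_matchings S A \<times> perfect_matchings T B.
            ((case XY of (X, Y) \<Rightarrow> X \<union> Y) \<inter> A, (case XY of (X, Y) \<Rightarrow> X \<union> Y) \<inter> B) = XY"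
      using AB by (blast dest: perfect_matchings_subset)
    show "\<forall>M\<in>perfect_matchings (S \<union> T) (A \<union> B).
            (case (M \<inter> A, M \<inter> B) of (X, Y) \<Rightarrow> X \<union> Y) = M"
      by (blast dest: perfect_matchings_subset)
    show "(\<lambda>(X, Y). X \<union> Y) ` (perfect_matchings S A \<times> perfect_matchings T B)
            \<subseteq> perfect_matchings (S \<union> T) (A \<union> B)"
    proof clarify
      fix X Y assume "X \<in> perfect_matchings S A" "Y \<in> perfect_matchings T B"
      hence XA: "X \<subseteq> A" and YB: "Y \<subseteq> B"
        and cover_S: "\<forall>x\<in>S. \<exists>!e\<in>X. fst e = x \<or> snd e = x"
        and cover_T: "\<forall>x\<in>T. \<exists>!e\<in>Y. fst e = x \<or> snd e = x"
        unfolding perfect_matchings_def mem_Collect_eq by blast+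
      have "\<forall>x\<in>S \<union> T. \<exists>!e\<in>X \<union> Y. fst e = x \<or> snd e = x"
        unfolding cover_Un[OF XA YB] using cover_S cover_T by (rule conjI)
      moreover have "X \<union> Y \<subseteq> A \<union> B" using XA YB by blast
      ultimately show "X \<union> Y \<in> perfect_matchings (S \<union> T) (A \<union> B)"
        unfolding perfect_matchings_def by blast
    qed
    show "(\<lambda>M. (M \<inter> A, M \<inter> B)) ` perfect_matchings (S \<union> T) (A \<union> B)
            \<subseteq> perfect_matchings S A \<times> perfect_matchings T B"
    proof (rule image_subsetI)
      fix M assume M: "M \<in> perfect_matchings (S \<union> T) (A \<union> B)"
      hence "(M \<inter> A) \<union> (M \<inter> B) = M" by (blast dest: perfect_matchings_subset)
      moreover from M have "\<forall>x\<in>S \<union> T. \<exists>!e\<in>M. fst e = x \<or> snd e = x"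
        unfolding perfect_matchings_def by blast
      ultimately have "\<forall>x\<in>S \<union> T. \<exists>!e\<in>(M \<inter> A) \<union> (M \<inter> B). fst e = x \<or> snd e = x"
        by simp
      hence "\<forall>x\<in>S. \<exists>!e\<in>M \<inter> A. fst e = x \<or> snd e = x"
        and "\<forall>x\<in>T. \<exists>!e\<in>M \<inter> B. fst e = x \<or> snd e = x"
        unfolding cover_Un[OF inf_le2 inf_le2] by blast+
      thus "(M \<inter> A, M \<inter> B) \<in> perfect_matchings S A \<times> perfect_matchings T B"
        unfolding perfect_matchings_def by blast
    qed
  qed
  thus ?thesis by (metis bij_betw_same_card card_cartesian_product)
qed

definition bracket_pairs :: "'a::linorder set \<Rightarrow> ('a \<Rightarrow> bool) \<Rightarrow> ('a \<times> 'a) set" where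
  "bracket_pairs S P = {(p, q). p < q \<and> p \<in> S \<and> q \<in> S \<and> P p \<and> \<not> P q}"

definition closing_surplus :: "'a::linorder set \<Rightarrow> ('a \<Rightarrow> bool) \<Rightarrow> 'a \<Rightarrow> nat" where
  "closing_surplus S P p = card {q\<in>S. p < q \<and> \<not> P q} - card {q\<in>S. p < q \<and> P q}"

lemma bracket_pairs_subset: "bracket_pairs S P \<subseteq> S \<times> S"
  unfolding bracket_pairs_def by auto

lemma bracket_pairs_restrict:
  "S' \<subseteq> S \<Longrightarrow> Restr (bracket_pairs S P) S' = bracket_pairs S' P"
  unfolding bracket_pairs_def by auto

lemma closing_surplus_Diff:
  assumes "finite S" and "p \<in> S" "P p" and "q \<in> S" "\<not> P q" and "p' < p" "p' < q"
  shows "closing_surplus (S - {p, q}) P p' = closing_surplus S P p'"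
proof -
  have "{x\<in>S - {p, q}. p' < x \<and> \<not> P x} = {x\<in>S. p' < x \<and> \<not> P x} - {q}"
       "{x\<in>S - {p, q}. p' < x \<and> P x} = {x\<in>S. p' < x \<and> P x} - {p}"
    using assms by auto
  moreover have "q \<in> {x\<in>S. p' < x \<and> \<not> P x}" "p \<in> {x\<in>S. p' < x \<and> P x}"
    using assms by auto
  moreover have "card {x\<in>S. p' < x \<and> P x} > 0"
    using assms(1) calculation(4) card_gt_0_iff by fastforce
  ultimately show ?thesis
    unfolding closing_surplus_def using assms(1) by (simp add: card_Diff_singleton)
qed

lemma closing_surplus_last_opener:
  assumes "\<forall>x\<in>S. P x \<longrightarrow> x \<le> p"
  shows "closing_surplus S P p = card {q\<in>S. p < q}"
proof -
  have closers: "{q\<in>S. p < q \<and> \<not> P q} = {q\<in>S. p < q}" using assms by force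
  have openers: "{q\<in>S. p < q \<and> P q} = {}" using assms by force
  show ?thesis unfolding closing_surplus_def closers openers by simp
qed

lemma card_bracket_matchings_expand_last_opener:
  assumes "finite S" and "p \<in> S" "P p" and "\<forall>x\<in>S. P x \<longrightarrow> x \<le> p"
  shows "card (perfect_matchings S (bracket_pairs S P)) =
    (\<Sum>q\<in>{q\<in>S. p < q}. card (perfect_matchings (S - {p, q}) (bracket_pairs (S - {p, q}) P)))"
proof -
  have "{e\<in>bracket_pairs S P. fst e = p \<or> snd e = p} = Pair p ` {q\<in>S. p < q}"
    using assms(2-4) unfolding bracket_pairs_def by force
  thus ?thesis
    using card_perfect_matchings_expand[OF assms(1,2) bracket_pairs_subset]
    by (simp add: bracket_pairs_restrict Diff_subset sum.reindex inj_on_def)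
qed

lemma card_bracket_matchings:
  fixes S :: "'a::linorder set"
  assumes "finite S" and "card {p\<in>S. P p} = card {q\<in>S. \<not> P q}"
  shows "card (perfect_matchings S (bracket_pairs S P)) =
    (\<Prod>p\<in>{p\<in>S. P p}. closing_surplus S P p)"
  using assms
proof (induction "card S" arbitrary: S rule: less_induct)
  case less
  let ?O = "{p\<in>S. P p}"
  show ?case
  proof (cases "?O = {}")
    case True
    hence "card {q\<in>S. \<not> P q} = 0" using less.prems(2) by (metis card.empty)
    hence "S = {}" using True less.prems(1) by auto
    thus ?thesis by (simp add: bracket_pairs_def perfect_matchings_empty)
  next
    case False
    have finO: "finite ?O" using less.prems(1) by simp
    define p where "p = Max ?O"
    have p: "p \<in> S" "P p" using Max_in[OF finO False] unfolding p_def by auto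
    have p_max: "\<forall>x\<in>S. P x \<longrightarrow> x \<le> p" using Max_ge[OF finO] unfolding p_def by auto
    let ?rest = "\<Prod>p'\<in>?O - {p}. closing_surplus S P p'"
    have remove_pair: "card (perfect_matchings (S - {p, q}) (bracket_pairs (S - {p, q}) P)) = ?rest"
      if "q \<in> S" "p < q" for q
    proof -
      have "\<not> P q" using p_max that by force
      have O_rest: "{x\<in>S - {p, q}. P x} = ?O - {p}" using \<open>\<not> P q\<close> by auto
      have "{x\<in>S - {p, q}. \<not> P x} = {x\<in>S. \<not> P x} - {q}" using p by auto
      hence "card {x\<in>S - {p, q}. P x} = card {x\<in>S - {p, q}. \<not> P x}"
        unfolding O_rest using less.prems p that \<open>\<not> P q\<close> by (simp add: card_Diff_singleton)
      moreover have "card (S - {p, q}) < card S"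
        using less.prems(1) p that by (intro psubset_card_mono) auto
      ultimately have "card (perfect_matchings (S - {p, q}) (bracket_pairs (S - {p, q}) P))
          = (\<Prod>p'\<in>?O - {p}. closing_surplus (S - {p, q}) P p')"
        using less.hyps less.prems(1) O_rest by simp
      also have "\<dots> = ?rest"
      proof (rule prod.cong[OF refl])
        fix p' assume "p' \<in> ?O - {p}"
        hence "p' < p" using p_max by force
        thus "closing_surplus (S - {p, q}) P p' = closing_surplus S P p'"
          using closing_surplus_Diff[OF less.prems(1) p that(1) \<open>\<not> P q\<close>] that(2) by simp
      qed
      finally show ?thesis .
    qed
    have "card (perfect_matchings S (bracket_pairs S P)) = (\<Sum>q\<in>{q\<in>S. p < q}. ?rest)"
      using card_bracket_matchings_expand_last_opener[OF less.prems(1) p p_max] remove_pair by simp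
    also have "\<dots> = closing_surplus S P p * ?rest"
      using closing_surplus_last_opener[OF p_max] by simp
    also have "\<dots> = (\<Prod>p'\<in>?O. closing_surplus S P p')"
      using p by (intro prod.remove[OF finO, symmetric]) simp
    finally show ?thesis .
  qed
qed

lemma card_bracket_matchings_image:
  fixes f :: "'a::linorder \<Rightarrow> 'b::linorder"
  assumes "finite S" and "strict_mono_on S f" and "\<And>x. x \<in> S \<Longrightarrow> Q (f x) = P x"
    and "card {p\<in>S. P p} = card {q\<in>S. \<not> P q}"
  shows "card (perfect_matchings (f ` S) (bracket_pairs (f ` S) Q)) =
    card (perfect_matchings S (bracket_pairs S P))"
proof -
  have card_image_S: "card (f ` A) = card A" if "A \<subseteq> S" for A
    using card_image inj_on_subset[OF strict_mono_on_imp_inj_on[OF assms(2)] that] by blast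
  have openers: "{y\<in>f ` S. Q y} = f ` {p\<in>S. P p}"
    using assms(3) by force
  have closers: "{y\<in>f ` S. \<not> Q y} = f ` {p\<in>S. \<not> P p}"
    using assms(3) by force
  have surplus: "closing_surplus (f ` S) Q (f p) = closing_surplus S P p" if "p \<in> S" for p
  proof -
    have "x \<in> S \<Longrightarrow> f p < f x \<longleftrightarrow> p < x" for x
      using strict_mono_on_less[OF assms(2) that] by blast
    hence "{y\<in>f ` S. f p < y \<and> \<not> Q y} = f ` {x\<in>S. p < x \<and> \<not> P x}"
      "{y\<in>f ` S. f p < y \<and> Q y} = f ` {x\<in>S. p < x \<and> P x}"
      using assms(3) by force+
    thus ?thesis unfolding closing_surplus_def by (simp add: card_image_S)
  qed
  have "card (perfect_matchings (f ` S) (bracket_pairs (f ` S) Q))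
      = (\<Prod>y\<in>f ` {p\<in>S. P p}. closing_surplus (f ` S) Q y)"
    using card_bracket_matchings[of "f ` S" Q] assms(1,4) by (simp add: openers closers card_image_S)
  also have "\<dots> = (\<Prod>p\<in>{p\<in>S. P p}. closing_surplus (f ` S) Q (f p))"
    using inj_on_subset[OF strict_mono_on_imp_inj_on[OF assms(2)], of "{p\<in>S. P p}"]
    by (simp add: prod.reindex)
  also have "\<dots> = (\<Prod>p\<in>{p\<in>S. P p}. closing_surplus S P p)"
    using surplus by simp
  also have "\<dots> = card (perfect_matchings S (bracket_pairs S P))"
    using card_bracket_matchings[OF assms(1,4)] by simp
  finally show ?thesis .
qed

lemma depth_conv_card:
  "k \<le> length w \<Longrightarrow>
    depth w k = int (card {i. i < k \<and> w ! i}) - int (card {i. i < k \<and> \<not> w ! i})"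
  unfolding depth_def
  by (simp add: length_filter_conv_card min_absorb2 nth_take conj_commute cong: conj_cong)

lemma concat_map_if_singleton:
  "concat (map (\<lambda>x. if P x then [f x] else []) xs) = map f (filter P xs)"
  by (induction xs) auto

lemma prod_list_opening_depths:
  "prod_list (opening_depths w) = (\<Prod>k\<in>{k. k < length w \<and> w ! k}. depth w (k + 1))"
proof -
  have "prod_list (opening_depths w) =
      prod_list (map (\<lambda>k. depth w (k + 1)) (filter ((!) w) [0..<length w]))"
    unfolding opening_depths_def concat_map_if_singleton ..
  also have "\<dots> = (\<Prod>k\<in>set (filter ((!) w) [0..<length w]). depth w (k + 1))"
    by (rule prod.distinct_set_conv_list[symmetric]) simp
  also have "set (filter ((!) w) [0..<length w]) = {k. k < length w \<and> w ! k}"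
    by auto
  finally show ?thesis .
qed

lemma dyck_balanced:
  "dyck w \<Longrightarrow> card {i\<in>{..<length w}. w ! i} = card {i\<in>{..<length w}. \<not> w ! i}"
  using depth_conv_card[of "length w" w] unfolding dyck_def by simp

lemma card_bracket_matchings_dyck:
  assumes "dyck w"
  shows "int (card (perfect_matchings {..<length w} (bracket_pairs {..<length w} ((!) w)))) =
    prod_list (opening_depths w)"
proof -
  let ?n = "length w"
  have split:
    "card {i. i < ?n \<and> R i} = card {i. i < k + 1 \<and> R i} + card {q\<in>{..<?n}. k < q \<and> R q}"
    if "k < ?n" for k R
  proof -
    have "{i. i < ?n \<and> R i} = {i. i < k + 1 \<and> R i} \<union> {q\<in>{..<?n}. k < q \<and> R q}"
      using that by auto
    thus ?thesis by (simp add: card_Un_disjoint disjoint_iff)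
  qed
  have balanced: "card {i. i < ?n \<and> w ! i} = card {i. i < ?n \<and> \<not> w ! i}"
    using dyck_balanced[OF assms] by simp
  have surplus: "int (closing_surplus {..<?n} ((!) w) k) = depth w (k + 1)" if "k < ?n" for k
  proof -
    have "depth w (k + 1) =
        int (card {q\<in>{..<?n}. k < q \<and> \<not> w ! q}) - int (card {q\<in>{..<?n}. k < q \<and> w ! q})"
      using depth_conv_card[of "k + 1" w] that balanced
        split[OF that, of "(!) w"] split[OF that, of "\<lambda>i. \<not> w ! i"]
      by simp
    moreover have "depth w (k + 1) \<ge> 0" using assms that unfolding dyck_def by simp
    ultimately show ?thesis unfolding closing_surplus_def by simp
  qed
  from dyck_balanced[OF assms]
  have "int (card (perfect_matchings {..<?n} (bracket_pairs {..<?n} ((!) w)))) =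
      (\<Prod>k\<in>{k\<in>{..<?n}. w ! k}. int (closing_surplus {..<?n} ((!) w) k))"
    by (simp add: card_bracket_matchings)
  also have "\<dots> = (\<Prod>k\<in>{k. k < ?n \<and> w ! k}. depth w (k + 1))"
    using surplus by (intro prod.cong) auto
  also have "\<dots> = prod_list (opening_depths w)"
    by (rule prod_list_opening_depths[symmetric])
  finally show ?thesis .
qed

definition occupied_positions :: "nat \<Rightarrow> elop list \<Rightarrow> nat set" where
  "occupied_positions Nocc e = {p. p < length e \<and> snd (e ! p) \<le> Nocc}"

definition virtual_positions :: "nat \<Rightarrow> elop list \<Rightarrow> nat set" where
  "virtual_positions Nocc e = {p. p < length e \<and> Nocc < snd (e ! p)}"

lemma card_well_contractions:
  "card (well_contractions Nocc e) =
     card (perfect_matchings (occupied_positions Nocc e)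
             (bracket_pairs (occupied_positions Nocc e) (\<lambda>p. fst (e ! p)))) *
     card (perfect_matchings (virtual_positions Nocc e)
             (bracket_pairs (virtual_positions Nocc e) (\<lambda>p. \<not> fst (e ! p))))"
proof -
  let ?O = "occupied_positions Nocc e" and ?V = "virtual_positions Nocc e"
  have "well_contractions Nocc e =
      perfect_matchings {..<length e} {(p, q). p < q \<and> q < length e \<and> well_pair Nocc (e ! p) (e ! q)}"
    unfolding well_contractions_def perfect_matchings_def by (simp only: Ball_def lessThan_iff)
  also have "{..<length e} = ?O \<union> ?V"
    unfolding occupied_positions_def virtual_positions_def by auto
  also have "{(p, q). p < q \<and> q < length e \<and> well_pair Nocc (e ! p) (e ! q)} =
      bracket_pairs ?O (\<lambda>p. fst (e ! p)) \<union> bracket_pairs ?V (\<lambda>p. \<not> fst (e ! p))"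
    unfolding occupied_positions_def virtual_positions_def bracket_pairs_def well_pair_def by auto
  moreover have "?O \<inter> ?V = {}"
    unfolding occupied_positions_def virtual_positions_def by auto
  ultimately show ?thesis
    by (simp add: card_perfect_matchings_Un bracket_pairs_subset)
qed

lemma length_expand: "length (expand x) = 2"
  by (cases x) simp_all

lemma length_elems: "length (elems C) = 2 * length C"
  by (induction C) (simp_all add: elems_def length_expand)

lemma nth_elems:
  "j < length C \<Longrightarrow> b < 2 \<Longrightarrow> elems C ! (2 * j + b) = expand (C ! j) ! b"
proof (induction C arbitrary: j)
  case (Cons x C)
  have "elems (x # C) = expand x @ elems C" by (simp add: elems_def)
  thus ?case using Cons by (cases j) (simp_all add: nth_append length_expand)
qed simp

text \<open>
  The \<open>j\<close>-th (de)excitation operator occupies positions \<open>2j\<close> and \<open>2j + 1\<close> of the expanded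
  chain; its occupied spin-orbital is the creator at \<open>2j\<close> for a deexcitation and the
  annihilator at \<open>2j + 1\<close> for an excitation, and its virtual one the other position.
\<close>

definition occupied_position :: "bool list \<Rightarrow> nat \<Rightarrow> nat" where
  "occupied_position w j = 2 * j + (if w ! j then 0 else 1)"

definition virtual_position :: "bool list \<Rightarrow> nat \<Rightarrow> nat" where
  "virtual_position w j = 2 * j + (if w ! j then 1 else 0)"

lemma strict_mono_on_occupied_position: "strict_mono_on A (occupied_position w)"
  unfolding strict_mono_on_def occupied_position_def by auto

lemma strict_mono_on_virtual_position: "strict_mono_on A (virtual_position w)"
  unfolding strict_mono_on_def virtual_position_def by auto

lemma elems_at_positions:
  assumes "valid_exop L Nocc (C ! j)" and "j < length C"
  shows "snd (elems C ! occupied_position (bracket_word C) j) \<le> Nocc"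
    and "fst (elems C ! occupied_position (bracket_word C) j) = bracket_word C ! j"
    and "Nocc < snd (elems C ! virtual_position (bracket_word C) j)"
    and "\<not> fst (elems C ! virtual_position (bracket_word C) j) = bracket_word C ! j"
  using assms nth_elems[OF assms(2), of 0] nth_elems[OF assms(2), of 1]
  by (cases "C ! j"; simp add: occupied_position_def virtual_position_def bracket_word_def)+

lemma positions_elems:
  assumes "\<forall>op \<in> set C. valid_exop L Nocc op"
  shows "occupied_positions Nocc (elems C) = occupied_position (bracket_word C) ` {..<length C}"
    and "virtual_positions Nocc (elems C) = virtual_position (bracket_word C) ` {..<length C}"
proof -
  let ?w = "bracket_word C"
  have at: "snd (elems C ! occupied_position ?w j) \<le> Nocc" "Nocc < snd (elems C ! virtual_position ?w j)"
    if "j < length C" for j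
    using elems_at_positions(1,3)[of L Nocc C j] assms that by simp_all
  have position_cases: "p = occupied_position ?w (p div 2) \<or> p = virtual_position ?w (p div 2)" for p
    unfolding occupied_position_def virtual_position_def by (cases "?w ! (p div 2)"; simp; presburger)
  have bounds: "occupied_position ?w j < length (elems C)" "virtual_position ?w j < length (elems C)"
    if "j < length C" for j
    using that unfolding occupied_position_def virtual_position_def length_elems by auto
  show "occupied_positions Nocc (elems C) = occupied_position ?w ` {..<length C}"
  proof (intro equalityI subsetI)
    fix p assume p: "p \<in> occupied_positions Nocc (elems C)"
    hence j: "p div 2 < length C" unfolding occupied_positions_def length_elems by auto
    have "p \<noteq> virtual_position ?w (p div 2)" using p at(2)[OF j] unfolding occupied_positions_def by auto
    hence "p = occupied_position ?w (p div 2)" using position_cases by blast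
    thus "p \<in> occupied_position ?w ` {..<length C}" using j by blast
  qed (use at bounds in \<open>auto simp: occupied_positions_def\<close>)
  show "virtual_positions Nocc (elems C) = virtual_position ?w ` {..<length C}"
  proof (intro equalityI subsetI)
    fix p assume p: "p \<in> virtual_positions Nocc (elems C)"
    hence j: "p div 2 < length C" unfolding virtual_positions_def length_elems by auto
    have "p \<noteq> occupied_position ?w (p div 2)" using p at(1)[OF j] unfolding virtual_positions_def by auto
    hence "p = virtual_position ?w (p div 2)" using position_cases by blast
    thus "p \<in> virtual_position ?w ` {..<length C}" using j by blast
  qed (use at bounds in \<open>auto simp: virtual_positions_def\<close>)
qed

theorem mainTheorem4:
  fixes L Nocc n :: nat and C :: "exop list"
  assumes "1 \<le> Nocc" and "Nocc < L" and "1 \<le> n"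
    and "\<forall>op \<in> set C. valid_exop L Nocc op"
    and "length C = 2 * n"
    and "length (filter is_deexc C) = n"
    and "dyck (bracket_word C)"
  shows "int (W Nocc C) = (prod_list (opening_depths (bracket_word C)))\<^sup>2"
proof -
  let ?w = "bracket_word C" and ?e = "elems C"
  let ?D = "card (perfect_matchings {..<length C} (bracket_pairs {..<length C} ((!) ?w)))"
  have len: "length ?w = length C" by (simp add: bracket_word_def)
  have balanced: "card {j\<in>{..<length C}. ?w ! j} = card {j\<in>{..<length C}. \<not> ?w ! j}"
    using dyck_balanced[OF assms(7)] len by simp
  have valid: "valid_exop L Nocc (C ! j)" if "j < length C" for j
    using assms(4) that by simp
  have "card (perfect_matchings (occupied_positions Nocc ?e)
      (bracket_pairs (occupied_positions Nocc ?e) (\<lambda>p. fst (?e ! p)))) = ?D"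
    unfolding positions_elems(1)[OF assms(4)]
    using strict_mono_on_occupied_position elems_at_positions(2)[OF valid] balanced
    by (intro card_bracket_matchings_image) auto
  moreover have "card (perfect_matchings (virtual_positions Nocc ?e)
      (bracket_pairs (virtual_positions Nocc ?e) (\<lambda>p. \<not> fst (?e ! p)))) = ?D"
    unfolding positions_elems(2)[OF assms(4)]
    using strict_mono_on_virtual_position elems_at_positions(4)[OF valid] balanced
    by (intro card_bracket_matchings_image) auto
  ultimately have "W Nocc C = ?D * ?D"
    unfolding W_def card_well_contractions by simp
  thus ?thesis
    using card_bracket_matchings_dyck[OF assms(7)] len by (simp add: power2_eq_square)
qed

end
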